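(* For every integer $n\ge 1$, the subdivision scheme $S_n$ is convergent.
   Context: For an integer $n\ge1$, the subdivision scheme $S_n$ acts on real sequences $\mathbf f^k=(f^k_i)_{i\in\mathbb Z}$ (the value $f^k_i$ being associated with the dyadic point $2^{-k}i$), starting from initial data $\mathbf f^0$, by the refinement rules $$f^{k+1}_{2i}=\frac1{2n-1}\sum_{j=-n+1}^{n-1}f^k_{i+j},\qquad f^{k+1}_{2i+1}=\frac1{2n}\sum_{j=-n+1}^{n}f^k_{i+j},\qquad i\in\mathbb Z,\ k\ge0.$$ A subdivision scheme is called convergent if for every bounded initial sequence $\mathbf f^0$ there is a continuous function $F:\mathbb R\to\mathbb R$ with $\lim_{k\to\infty}\sup_{i\in\mathbb Z}|f^k_i-F(2^{-k}i)|=0$, and $F$ is not identically zero for some initial data; $F$ is called the limit function generated from $\mathbf f^0$. *)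

theory Defs
  imports "HOL-Analysis.Analysis"
begin

text \<open>One refinement step of the scheme S_n: maps the sequence f^k to f^(k+1).
  For m = 2i (even) and m = 2i+1 (odd) we have m div 2 = i (floor division).\<close>
definition subdiv_rule :: "nat \<Rightarrow> (int \<Rightarrow> real) \<Rightarrow> int \<Rightarrow> real" where
  "subdiv_rule n f m =
     (if even m
      then (\<Sum>j\<in>{-(int n)+1..int n - 1}. f (m div 2 + j)) / real (2*n - 1)
      else (\<Sum>j\<in>{-(int n)+1..int n}. f (m div 2 + j)) / real (2*n))"

definition generates_limit ::
  "((int \<Rightarrow> real) \<Rightarrow> int \<Rightarrow> real) \<Rightarrow> (int \<Rightarrow> real) \<Rightarrow> (real \<Rightarrow> real) \<Rightarrow> bool" where
  "generates_limit S f0 F \<longleftrightarrow> continuous_on UNIV F \<and>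
     (\<forall>\<epsilon>>0. \<exists>K. \<forall>k\<ge>K. \<forall>i. \<bar>(S ^^ k) f0 i - F (real_of_int i / 2 ^ k)\<bar> \<le> \<epsilon>)"

definition convergent_scheme :: "((int \<Rightarrow> real) \<Rightarrow> int \<Rightarrow> real) \<Rightarrow> bool" where
  "convergent_scheme S \<longleftrightarrow>
     (\<forall>f0. bounded (range f0) \<longrightarrow> (\<exists>F. generates_limit S f0 F)) \<and>
     (\<exists>f0 F. bounded (range f0) \<and> generates_limit S f0 F \<and> F \<noteq> (\<lambda>_. 0))"

end

theory Submission
  imports Defs
begin

text \<open>Both refinement rules average f^k over a window of 2n - 1 or 2n consecutive integers,
  and consecutive windows differ by one point adjacent to a run of 2n - 1 integers. Hence each
  step halves a bound D on the first differences |f(i + 1) - f(i)|, while f^(k+1)(m) stays within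
  n D / 2^k of f^k(m div 2). So the step functions x \<mapsto> f^k(floor(2^k x)) converge uniformly at a
  geometric rate, and their limit is D-Lipschitz, hence continuous. Constant data are
  reproduced, so the constant 1 has a nonzero limit.\<close>

definition diff_bounded :: "real \<Rightarrow> (int \<Rightarrow> real) \<Rightarrow> bool" where
  "diff_bounded D f \<longleftrightarrow> (\<forall>i. \<bar>f (i + 1) - f i\<bar> \<le> D)"

lemma diff_bounded_nonneg: "diff_bounded D f \<Longrightarrow> 0 \<le> D"
  unfolding diff_bounded_def by (meson abs_ge_zero order_trans)

lemma diff_bounded_const: "diff_bounded 0 (\<lambda>_. c)"
  unfolding diff_bounded_def by simp

lemma diff_bounded_dist:
  assumes "diff_bounded D f"
  shows "\<bar>f a - f b\<bar> \<le> D * \<bar>real_of_int (a - b)\<bar>"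
proof -
  have up: "\<bar>f (b + int k) - f b\<bar> \<le> D * real k" for b k
  proof (induction k)
    case (Suc k)
    have "\<bar>f (b + int k + 1) - f (b + int k)\<bar> \<le> D"
      using assms unfolding diff_bounded_def by blast
    with Suc.IH show ?case by (simp add: add.assoc algebra_simps)
  qed simp
  show ?thesis
  proof (cases "b \<le> a")
    case True
    then show ?thesis using up[of b "nat (a - b)"] by simp
  next
    case False
    then show ?thesis using up[of a "nat (b - a)"] by (simp add: abs_minus_commute)
  qed
qed

lemma diff_bounded_if_bounded:
  assumes "bounded (range f)"
  obtains D where "diff_bounded D f"
proof -
  obtain M where "\<And>i. \<bar>f i\<bar> \<le> M" using assms unfolding bounded_iff by auto
  then have "diff_bounded (2 * M) f"
    unfolding diff_bounded_def by (metis abs_triangle_ineq4 add_mono mult_2 order_trans)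
  then show thesis by (rule that)
qed

lemma diff_bounded_floor:
  assumes "diff_bounded D f"
  shows "\<bar>f \<lfloor>x\<rfloor> - f \<lfloor>y\<rfloor>\<bar> \<le> D * (\<bar>x - y\<bar> + 1)"
proof -
  have "\<bar>real_of_int (\<lfloor>x\<rfloor> - \<lfloor>y\<rfloor>)\<bar> \<le> \<bar>x - y\<bar> + 1" by linarith
  then show ?thesis
    using diff_bounded_dist[OF assms] diff_bounded_nonneg[OF assms]
    by (meson mult_left_mono order_trans)
qed

definition mean :: "('a \<Rightarrow> real) \<Rightarrow> 'a set \<Rightarrow> real" where
  "mean f A = sum f A / real (card A)"

lemma mean_const: "finite A \<Longrightarrow> A \<noteq> {} \<Longrightarrow> mean (\<lambda>_. c) A = c"
  unfolding mean_def by simp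

lemma mean_mono: "(\<And>j. j \<in> A \<Longrightarrow> f j \<le> g j) \<Longrightarrow> mean f A \<le> mean g A"
  unfolding mean_def by (intro divide_right_mono sum_mono) auto

lemma abs_mean_diff_le:
  assumes "finite A" "A \<noteq> {}"
  shows "\<bar>mean f A - c\<bar> \<le> mean (\<lambda>j. \<bar>f j - c\<bar>) A"
proof -
  have "mean f A - c = mean (\<lambda>j. f j - c) A"
    using assms unfolding mean_def by (simp add: sum_subtractf field_simps)
  then show ?thesis
    unfolding mean_def by (simp add: abs_divide divide_right_mono sum_abs)
qed

lemma mean_insert:
  assumes "finite A" "p \<notin> A"
  shows "mean f (insert p A) - mean f A = (f p - mean f A) / (real (card A) + 1)"
proof (cases "A = {}")
  case False
  with assms have "card A \<noteq> 0" by simp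
  with assms show ?thesis unfolding mean_def by (simp add: field_simps)
qed (simp add: mean_def)

lemma mean_translate:
  fixes c :: "'a::ab_group_add"
  shows "mean f ((+) c ` J) = (\<Sum>j\<in>J. f (c + j)) / real (card J)"
  unfolding mean_def by (simp add: sum.reindex card_image)

lemma sum_dist_above:
  "(\<Sum>j\<in>{p + 1..p + int N}. \<bar>real_of_int (j - p)\<bar>) = real N * (real N + 1) / 2"
proof (induction N)
  case (Suc N)
  have "{p + 1..p + int (Suc N)} = insert (p + int N + 1) {p + 1..p + int N}" by auto
  with Suc show ?case by (simp add: field_simps)
qed simp

lemma sum_dist_below:
  "(\<Sum>j\<in>{p - int N..p - 1}. \<bar>real_of_int (j - p)\<bar>) = real N * (real N + 1) / 2"
proof (induction N)
  case (Suc N)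
  have "{p - int (Suc N)..p - 1} = insert (p - int N - 1) {p - int N..p - 1}" by auto
  with Suc show ?case by (simp add: field_simps)
qed simp

lemma mean_insert_adjacent:
  assumes f: "diff_bounded D f" and A: "finite A" "A \<noteq> {}" "p \<notin> A"
    and dist: "(\<Sum>j\<in>A. \<bar>real_of_int (j - p)\<bar>) = real (card A) * (real (card A) + 1) / 2"
  shows "\<bar>mean f (insert p A) - mean f A\<bar> \<le> D / 2"
proof -
  have N: "real (card A) > 0" using A by (simp add: card_gt_0_iff)
  have "\<bar>mean f A - f p\<bar> \<le> mean (\<lambda>j. D * \<bar>real_of_int (j - p)\<bar>) A"
    using abs_mean_diff_le[OF A(1,2)] mean_mono diff_bounded_dist[OF f] by (meson order_trans)
  also have "\<dots> = D * (real (card A) + 1) / 2"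
    unfolding mean_def sum_distrib_left[symmetric] dist using N by (simp add: field_simps)
  finally show ?thesis
    unfolding mean_insert[OF A(1,3)] using N by (simp add: abs_divide abs_minus_commute field_simps)
qed

definition subdiv_window :: "nat \<Rightarrow> int \<Rightarrow> int set" where
  "subdiv_window n m = {m div 2 - int n + 1 .. m div 2 + int n - (if even m then 1 else 0)}"

lemma subdiv_rule_eq_mean: "subdiv_rule n f m = mean f (subdiv_window n m)"
proof (cases "even m")
  case True
  have "card {-int n + 1..int n - 1} = 2 * n - 1" by simp
  with True have "subdiv_rule n f m = mean f ((+) (m div 2) ` {-int n + 1..int n - 1})"
    unfolding mean_translate subdiv_rule_def by simp
  also have "(+) (m div 2) ` {-int n + 1..int n - 1} = subdiv_window n m"
    using True unfolding subdiv_window_def by (simp add: algebra_simps)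
  finally show ?thesis .
next
  case False
  have "subdiv_rule n f m = mean f ((+) (m div 2) ` {-int n + 1..int n})"
    using False unfolding mean_translate subdiv_rule_def by simp
  also have "(+) (m div 2) ` {-int n + 1..int n} = subdiv_window n m"
    using False unfolding subdiv_window_def by (simp add: algebra_simps)
  finally show ?thesis .
qed

lemma subdiv_rule_near_parent:
  assumes f: "diff_bounded D f" and n: "n \<ge> 1"
  shows "\<bar>subdiv_rule n f m - f (m div 2)\<bar> \<le> real n * D"
proof -
  let ?W = "subdiv_window n m"
  have W: "finite ?W" "?W \<noteq> {}" using n unfolding subdiv_window_def by auto
  have "\<bar>f j - f (m div 2)\<bar> \<le> real n * D" if "j \<in> ?W" for j
  proof -
    have "\<bar>real_of_int (j - m div 2)\<bar> \<le> real n"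
      using that unfolding subdiv_window_def by (auto split: if_splits)
    then show ?thesis using diff_bounded_dist[OF f] diff_bounded_nonneg[OF f]
      by (metis mult.commute mult_left_mono order_trans)
  qed
  then have "mean (\<lambda>j. \<bar>f j - f (m div 2)\<bar>) ?W \<le> real n * D"
    using mean_mono[of ?W _ "\<lambda>_. real n * D"] mean_const[OF W] by auto
  then show ?thesis
    unfolding subdiv_rule_eq_mean using abs_mean_diff_le[OF W] by (meson order_trans)
qed

lemma diff_bounded_subdiv_rule:
  assumes f: "diff_bounded D f" and n: "n \<ge> 1"
  shows "diff_bounded (D / 2) (subdiv_rule n f)"
  unfolding diff_bounded_def subdiv_rule_eq_mean
proof
  fix m :: int
  define N where "N = 2 * n - 1"
  have N: "int N = 2 * int n - 1" "N > 0" using n unfolding N_def by auto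
  show "\<bar>mean f (subdiv_window n (m + 1)) - mean f (subdiv_window n m)\<bar> \<le> D / 2"
  proof (cases "even m")
    case True
    define p where "p = m div 2 + int n"
    have W: "subdiv_window n m = {p - int N..p - 1}"
      using True N unfolding subdiv_window_def p_def by auto
    have "subdiv_window n (m + 1) = insert p (subdiv_window n m)"
      using True n unfolding subdiv_window_def p_def by auto
    moreover have "card {p - int N..p - 1} = N" by simp
    ultimately show ?thesis
      using mean_insert_adjacent[OF f, of "{p - int N..p - 1}" p] sum_dist_below[of p N] N(2)
      unfolding W by simp
  next
    case False
    define p where "p = m div 2 - int n + 1"
    have W: "subdiv_window n (m + 1) = {p + 1..p + int N}"
      using False N unfolding subdiv_window_def p_def by auto
    have "subdiv_window n m = insert p (subdiv_window n (m + 1))"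
      using False n unfolding subdiv_window_def p_def by auto
    moreover have "card {p + 1..p + int N} = N" by simp
    ultimately show ?thesis
      using mean_insert_adjacent[OF f, of "{p + 1..p + int N}" p] sum_dist_above[of p N] N(2)
      unfolding W by (simp add: abs_minus_commute)
  qed
qed

lemma diff_bounded_iterate:
  assumes "diff_bounded D f" "n \<ge> 1"
  shows "diff_bounded (D / 2 ^ k) ((subdiv_rule n ^^ k) f)"
proof (induction k)
  case (Suc k)
  have "D / 2 ^ Suc k = D / 2 ^ k / 2" by simp
  then show ?case
    unfolding funpow.simps comp_apply by (metis diff_bounded_subdiv_rule[OF Suc assms(2)])
qed (simp add: assms(1))

lemma geometric_limit:
  fixes g :: "nat \<Rightarrow> 'a \<Rightarrow> real"
  assumes step: "\<And>k x. \<bar>g (Suc k) x - g k x\<bar> \<le> C / 2 ^ k"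
  obtains F where "\<And>k x. \<bar>F x - g k x\<bar> \<le> 2 * C / 2 ^ k"
proof
  fix k x
  define h where "h m = g (Suc m) x - g m x" for m
  have h: "\<bar>h m\<bar> \<le> C * (1/2) ^ m" for m
    using step unfolding h_def by (simp add: power_one_over)
  have geom: "summable (\<lambda>m. c * (1/2::real) ^ m)" for c
    by (intro summable_mult summable_geometric) simp
  have "summable h" by (rule summable_comparison_test'[OF geom]) (use h in simp)
  have "g 0 x + suminf h - g k x = (\<Sum>m. h (m + k))"
    using suminf_minus_initial_segment[OF \<open>summable h\<close>, of k]
      sum_lessThan_telescope[of "\<lambda>m. g m x" k] unfolding h_def by simp
  also have "\<bar>\<dots>\<bar> \<le> (\<Sum>m. C / 2 ^ k * (1/2) ^ m)"
  proof (rule norm_suminf_le[where f="\<lambda>m. h (m + k)", unfolded real_norm_def])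
    show "\<bar>h (m + k)\<bar> \<le> C / 2 ^ k * (1/2) ^ m" for m
      using h[of "m + k"] by (simp add: power_add power_one_over mult.commute)
  qed (rule geom)
  also have "\<dots> = 2 * C / 2 ^ k"
    by (subst suminf_mult) (simp_all add: suminf_geometric)
  finally show "\<bar>g 0 x + suminf h - g k x\<bar> \<le> 2 * C / 2 ^ k" .
qed

lemma le_of_le_plus_geometric:
  assumes "\<And>k. a \<le> b + C / 2 ^ k"
  shows "a \<le> (b::real)"
proof (rule LIMSEQ_le_const)
  show "(\<lambda>k. b + C / 2 ^ k) \<longlonglongrightarrow> b"
    using tendsto_add[OF tendsto_const LIMSEQ_divide_realpow_zero[of 2 C], of b] by simp
qed (use assms in blast)

lemma lipschitz_of_geometric_limit:
  fixes F :: "real \<Rightarrow> real"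
  assumes "\<And>k x. \<bar>F x - g k x\<bar> \<le> C / 2 ^ k"
    and "\<And>k x y. \<bar>g k x - g k y\<bar> \<le> L * \<bar>x - y\<bar> + E / 2 ^ k"
  shows "\<bar>F x - F y\<bar> \<le> L * \<bar>x - y\<bar>"
proof (rule le_of_le_plus_geometric)
  fix k
  have "\<bar>F x - F y\<bar> \<le> C / 2 ^ k + (L * \<bar>x - y\<bar> + E / 2 ^ k) + C / 2 ^ k"
    using assms(1)[of x k] assms(1)[of y k] assms(2)[of k x y] by linarith
  then show "\<bar>F x - F y\<bar> \<le> L * \<bar>x - y\<bar> + (2 * C + E) / 2 ^ k"
    by (simp add: add_divide_distrib)
qed

lemma generates_limit_geometric:
  assumes "continuous_on UNIV F"
    and "\<And>k i. \<bar>(S ^^ k) f0 i - F (real_of_int i / 2 ^ k)\<bar> \<le> C / 2 ^ k"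
  shows "generates_limit S f0 F"
  unfolding generates_limit_def
proof (intro conjI allI impI)
  fix \<epsilon> :: real assume "\<epsilon> > 0"
  then have "eventually (\<lambda>k. C / 2 ^ k < \<epsilon>) sequentially"
    using order_tendstoD(2)[OF LIMSEQ_divide_realpow_zero] by simp
  then show "\<exists>K. \<forall>k\<ge>K. \<forall>i. \<bar>(S ^^ k) f0 i - F (real_of_int i / 2 ^ k)\<bar> \<le> \<epsilon>"
    unfolding eventually_sequentially using assms(2) by (meson less_imp_le order_trans)
qed (rule assms(1))

lemma floor_double_div_2: "\<lfloor>2 * x\<rfloor> div 2 = \<lfloor>x::real\<rfloor>"
proof -
  have "2 * \<lfloor>x\<rfloor> \<le> \<lfloor>2 * x\<rfloor>" "\<lfloor>2 * x\<rfloor> < 2 * \<lfloor>x\<rfloor> + 2" by linarith+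
  then show ?thesis by linarith
qed

lemma subdiv_rule_generates_limit:
  assumes n: "n \<ge> 1" and f0: "diff_bounded D f0"
  shows "\<exists>F. generates_limit (subdiv_rule n) f0 F"
proof -
  define f where "f k = (subdiv_rule n ^^ k) f0" for k
  define g where "g k x = f k \<lfloor>2 ^ k * x\<rfloor>" for k and x :: real
  have f_diff: "diff_bounded (D / 2 ^ k) (f k)" for k
    unfolding f_def by (rule diff_bounded_iterate[OF f0 n])
  have "\<bar>g (Suc k) x - g k x\<bar> \<le> real n * D / 2 ^ k" for k x
  proof -
    have "g (Suc k) x = subdiv_rule n (f k) \<lfloor>2 * (2 ^ k * x)\<rfloor>"
      unfolding g_def f_def by (simp add: mult_ac)
    moreover have "g k x = f k (\<lfloor>2 * (2 ^ k * x)\<rfloor> div 2)"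
      unfolding g_def floor_double_div_2 ..
    ultimately show ?thesis
      using subdiv_rule_near_parent[OF f_diff n] by simp
  qed
  then obtain F where F: "\<And>k x. \<bar>F x - g k x\<bar> \<le> 2 * (real n * D) / 2 ^ k"
    using geometric_limit by blast
  have g_lip: "\<bar>g k x - g k y\<bar> \<le> D * \<bar>x - y\<bar> + D / 2 ^ k" for k x y
  proof -
    have "\<bar>g k x - g k y\<bar> \<le> D / 2 ^ k * (\<bar>2 ^ k * x - 2 ^ k * y\<bar> + 1)"
      unfolding g_def by (rule diff_bounded_floor[OF f_diff])
    also have "\<dots> = D * \<bar>x - y\<bar> + D / 2 ^ k"
      by (simp only: right_diff_distrib[symmetric] abs_mult) (simp add: field_simps)
    finally show ?thesis .
  qed
  have "\<bar>F x - F y\<bar> \<le> D * \<bar>x - y\<bar>" for x y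
    by (rule lipschitz_of_geometric_limit[OF F g_lip])
  then have "D-lipschitz_on UNIV F"
    using diff_bounded_nonneg[OF f0] unfolding lipschitz_on_def dist_real_def by simp
  moreover have "\<bar>f k i - F (real_of_int i / 2 ^ k)\<bar> \<le> 2 * (real n * D) / 2 ^ k" for k i
    using F[of "real_of_int i / 2 ^ k" k] unfolding g_def by (simp add: abs_minus_commute)
  ultimately have "generates_limit (subdiv_rule n) f0 F"
    unfolding f_def by (intro generates_limit_geometric lipschitz_on_continuous_on)
  then show ?thesis by blast
qed

lemma subdiv_rule_iterate_const_1:
  assumes "n \<ge> 1"
  shows "(subdiv_rule n ^^ k) (\<lambda>_. 1) = (\<lambda>_. 1)"
proof (induction k)
  case (Suc k)
  from subdiv_rule_near_parent[OF diff_bounded_const assms] Suc show ?case by auto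
qed simp

theorem theorem1:
  fixes n :: nat
  assumes "n \<ge> 1"
  shows "convergent_scheme (subdiv_rule n)"
  unfolding convergent_scheme_def
proof (intro conjI allI impI)
  fix f0 :: "int \<Rightarrow> real" assume "bounded (range f0)"
  then obtain D where "diff_bounded D f0" by (rule diff_bounded_if_bounded)
  then show "\<exists>F. generates_limit (subdiv_rule n) f0 F"
    by (rule subdiv_rule_generates_limit[OF assms])
next
  obtain F where F: "generates_limit (subdiv_rule n) (\<lambda>_. 1) F"
    using subdiv_rule_generates_limit[OF assms diff_bounded_const] by blast
  then obtain K where "\<forall>k\<ge>K. \<forall>i. \<bar>(subdiv_rule n ^^ k) (\<lambda>_. 1) i - F (real_of_int i / 2 ^ k)\<bar> \<le> 1/2"
    unfolding generates_limit_def by (meson half_gt_zero zero_less_one)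
  then have "\<bar>1 - F 0\<bar> \<le> 1/2"
    using subdiv_rule_iterate_const_1[OF assms, of K] by (metis order_refl of_int_0 div_0)
  then have "F \<noteq> (\<lambda>_. 0)" by auto
  moreover have "bounded (range (\<lambda>_::int. 1::real))" by simp
  ultimately show "\<exists>f0 F. bounded (range f0) \<and> generates_limit (subdiv_rule n) f0 F \<and> F \<noteq> (\<lambda>_. 0)"
    using F by blast
qed

end
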